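(* Let $K\in\mathbb{N}^*$. For every $p\in\mathbb{N}^*$ and every real-valued $\mu\in C_c^\infty(0,1)$, $$A^p_K(\mu)=\frac{(-1)^{p-1}}2\big\langle[\operatorname{ad}_A^{p-1}(\mu),\operatorname{ad}_A^p(\mu)]\varphi_1,\varphi_K\big\rangle.$$
   Context: $A=-d^2/dx^2$, acting on smooth functions on $[0,1]$; $\mu$ is identified with the multiplication operator $f\mapsto\mu f$; $[P,Q]=PQ-QP$, $\operatorname{ad}_A^0(\mu)=\mu$, $\operatorname{ad}_A^{k+1}(\mu)=[A,\operatorname{ad}_A^k(\mu)]$. $\varphi_j=\sqrt2\sin(j\pi x)$, $\lambda_j=(j\pi)^2$, $\langle f,g\rangle=\int_0^1f\bar g$, $c_j=\langle\mu\varphi_1,\varphi_j\rangle\langle\mu\varphi_K,\varphi_j\rangle$, and $A^p_K(\mu)=(-1)^{p-1}\sum_{j\ge1}(\lambda_j-\frac{\lambda_1+\lambda_K}2)(\lambda_K-\lambda_j)^{p-1}(\lambda_j-\lambda_1)^{p-1}c_j$ (absolutely convergent for such $\mu$). *)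

theory Defs
  imports "HOL-Analysis.Analysis"
begin

text \<open>Operators act on functions real => real (smooth functions on the line;
  all functions involved are smooth on R, and we only integrate over [0,1]).\<close>

definition lapA :: "(real \<Rightarrow> real) \<Rightarrow> (real \<Rightarrow> real)" where
  "lapA f = (\<lambda>x. - deriv (deriv f) x)"

definition mult_op :: "(real \<Rightarrow> real) \<Rightarrow> (real \<Rightarrow> real) \<Rightarrow> (real \<Rightarrow> real)" where
  "mult_op \<mu> f = (\<lambda>x. \<mu> x * f x)"

definition comm ::
  "((real \<Rightarrow> real) \<Rightarrow> (real \<Rightarrow> real)) \<Rightarrow> ((real \<Rightarrow> real) \<Rightarrow> (real \<Rightarrow> real))
    \<Rightarrow> (real \<Rightarrow> real) \<Rightarrow> (real \<Rightarrow> real)" where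
  "comm P Q = (\<lambda>f x. P (Q f) x - Q (P f) x)"

fun adA :: "nat \<Rightarrow> (real \<Rightarrow> real) \<Rightarrow> (real \<Rightarrow> real) \<Rightarrow> (real \<Rightarrow> real)" where
  "adA 0 \<mu> = mult_op \<mu>"
| "adA (Suc k) \<mu> = comm lapA (adA k \<mu>)"

definition phi :: "nat \<Rightarrow> real \<Rightarrow> real" where
  "phi j x = sqrt 2 * sin (real j * pi * x)"

definition lam :: "nat \<Rightarrow> real" where
  "lam j = (real j * pi)\<^sup>2"

definition inner01 :: "(real \<Rightarrow> real) \<Rightarrow> (real \<Rightarrow> real) \<Rightarrow> real" where
  "inner01 f g = integral {0..1} (\<lambda>x. f x * g x)"

definition coefc :: "(real \<Rightarrow> real) \<Rightarrow> nat \<Rightarrow> nat \<Rightarrow> real" where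
  "coefc \<mu> K j = inner01 (mult_op \<mu> (phi 1)) (phi j) * inner01 (mult_op \<mu> (phi K)) (phi j)"

definition AKp :: "nat \<Rightarrow> nat \<Rightarrow> (real \<Rightarrow> real) \<Rightarrow> real" where
  "AKp K p \<mu> = (-1) ^ (p - 1) *
     (\<Sum>i. let j = Suc i in
        (lam j - (lam 1 + lam K) / 2) * (lam K - lam j) ^ (p - 1) * (lam j - lam 1) ^ (p - 1)
        * coefc \<mu> K j)"

text \<open>Real-valued mu in C_c^infty(0,1), extended by zero to R: all iterated
  derivatives exist everywhere, and the support lies in a compact [a,b] within (0,1).\<close>
definition smooth_compact_01 :: "(real \<Rightarrow> real) \<Rightarrow> bool" where
  "smooth_compact_01 \<mu> \<longleftrightarrow>
     (\<forall>k x. ((deriv ^^ k) \<mu>) differentiable (at x)) \<and>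
     (\<exists>a b. 0 < a \<and> a \<le> b \<and> b < 1 \<and> (\<forall>x. x \<notin> {a..b} \<longrightarrow> \<mu> x = 0))"

end

theory Submission
  imports Defs
begin

text \<open>Both sides are expanded in the Dirichlet eigenbasis phi_j of A. Because \<mu> has compact
  support in (0, 1), Green's formula has no boundary terms, so ad^k is self-adjoint up to the sign
  (-1)^k and acts on matrix coefficients by
  \<langle>ad^k phi_i, phi_j\<rangle> = (lambda_j - lambda_i)^k \<langle>\<mu> phi_i, phi_j\<rangle>.
  Adjointness turns the commutator into
  (-1)^(p-1) (\<langle>ad^p phi_1, ad^(p-1) phi_K\<rangle> + \<langle>ad^(p-1) phi_1, ad^p phi_K\<rangle>),
  Parseval's identity expands each term as a series over j, and averaging the two series produces
  the weight lambda_j - (lambda_1 + lambda_K) / 2 of A^p_K. Completeness of the sine system, needed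
  for Parseval, follows from the Weierstrass approximation theorem after the substitution
  t = cos(\<pi> x).\<close>

section \<open>Smooth functions on the real line\<close>

coinductive smooth :: "(real \<Rightarrow> real) \<Rightarrow> bool" where
  "(\<And>x. (f has_real_derivative f' x) (at x)) \<Longrightarrow> smooth f' \<Longrightarrow> smooth f"

lemma smooth_DERIV: "smooth f \<Longrightarrow> (f has_real_derivative deriv f x) (at x)"
  by (metis DERIV_imp_deriv smooth.cases)

lemma smooth_deriv: "smooth f \<Longrightarrow> smooth (deriv f)"
proof -
  assume "smooth f"
  then obtain f' where "\<And>x. (f has_real_derivative f' x) (at x)" "smooth f'"
    by (cases rule: smooth.cases) auto
  moreover from this have "deriv f = f'" by (intro ext DERIV_imp_deriv)
  ultimately show ?thesis by simp
qed

lemma smooth_continuous_on: "smooth f \<Longrightarrow> continuous_on S f"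
  by (meson DERIV_isCont continuous_at_imp_continuous_on smooth_DERIV)

text \<open>Finite sums of products of smooth functions are closed under differentiation, which makes
  them the coinduction invariant for the product rule.\<close>

fun sum_prods :: "((real \<Rightarrow> real) \<times> (real \<Rightarrow> real)) list \<Rightarrow> real \<Rightarrow> real" where
  "sum_prods [] x = 0"
| "sum_prods ((f, g) # ps) x = f x * g x + sum_prods ps x"

fun sum_prods_deriv ::
  "((real \<Rightarrow> real) \<times> (real \<Rightarrow> real)) list \<Rightarrow> ((real \<Rightarrow> real) \<times> (real \<Rightarrow> real)) list" where
  "sum_prods_deriv [] = []"
| "sum_prods_deriv ((f, g) # ps) = (deriv f, g) # (f, deriv g) # sum_prods_deriv ps"

lemma has_real_derivative_sum_prods:
  assumes "\<forall>(f, g)\<in>set ps. smooth f \<and> smooth g"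
  shows "(sum_prods ps has_real_derivative sum_prods (sum_prods_deriv ps) x) (at x)
    \<and> (\<forall>(f, g)\<in>set (sum_prods_deriv ps). smooth f \<and> smooth g)"
  using assms
proof (induction ps)
  case Nil
  then show ?case by (simp add: fun_eq_iff[symmetric])
next
  case (Cons fg ps)
  obtain f g where fg: "fg = (f, g)" by force
  with Cons.prems have f: "smooth f" and g: "smooth g" by auto
  have "sum_prods ((f, g) # ps) = (\<lambda>x. f x * g x + sum_prods ps x)" by auto
  moreover have "((\<lambda>x. f x * g x + sum_prods ps x) has_real_derivative
      (deriv f x * g x + f x * deriv g x) + sum_prods (sum_prods_deriv ps) x) (at x)"
    using Cons smooth_DERIV[OF f] smooth_DERIV[OF g] by (auto intro!: derivative_eq_intros)
  ultimately show ?case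
    using Cons fg f g smooth_deriv[OF f] smooth_deriv[OF g] by (simp add: algebra_simps)
qed

lemma smooth_sum_prods:
  assumes "\<forall>(f, g)\<in>set ps. smooth f \<and> smooth g"
  shows "smooth (sum_prods ps)"
proof -
  have "\<exists>ps. (\<forall>(f, g)\<in>set ps. smooth f \<and> smooth g) \<and> h = sum_prods ps \<Longrightarrow> smooth h" for h
  proof (coinduction arbitrary: h rule: smooth.coinduct)
    case smooth
    then show ?case using has_real_derivative_sum_prods by blast
  qed
  with assms show ?thesis by blast
qed

lemma smooth_const: "smooth (\<lambda>x. c)"
proof -
  have "\<exists>c. h = (\<lambda>x. c) \<Longrightarrow> smooth h" for h
  proof (coinduction arbitrary: h rule: smooth.coinduct)
    case smooth
    then show ?case by (auto intro!: exI[of _ "\<lambda>x. 0"] derivative_eq_intros)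
  qed
  then show ?thesis by blast
qed

lemma smooth_mult: "smooth f \<Longrightarrow> smooth g \<Longrightarrow> smooth (\<lambda>x. f x * g x)"
proof -
  have "sum_prods [(f, g)] = (\<lambda>x. f x * g x)" by auto
  then show "smooth f \<Longrightarrow> smooth g \<Longrightarrow> ?thesis"
    using smooth_sum_prods[of "[(f, g)]"] by simp
qed

lemma smooth_add: "smooth f \<Longrightarrow> smooth g \<Longrightarrow> smooth (\<lambda>x. f x + g x)"
proof -
  have "sum_prods [(f, \<lambda>x. 1), (g, \<lambda>x. 1)] = (\<lambda>x. f x + g x)" by auto
  then show "smooth f \<Longrightarrow> smooth g \<Longrightarrow> ?thesis"
    using smooth_sum_prods[of "[(f, \<lambda>x. 1), (g, \<lambda>x. 1)]"] by (simp add: smooth_const)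
qed

lemma smooth_cmult: "smooth f \<Longrightarrow> smooth (\<lambda>x. c * f x)"
  using smooth_mult[OF smooth_const] by blast

lemma smooth_diff: "smooth f \<Longrightarrow> smooth g \<Longrightarrow> smooth (\<lambda>x. f x - g x)"
  using smooth_add[of f "\<lambda>x. (-1) * g x"] smooth_cmult[of g "-1"] by simp

lemma smooth_lapA: "smooth f \<Longrightarrow> smooth (lapA f)"
  unfolding lapA_def using smooth_cmult[of "deriv (deriv f)" "-1"] smooth_deriv by simp

lemma smooth_compact_01_imp_smooth:
  assumes "smooth_compact_01 \<mu>"
  shows "smooth \<mu>"
proof -
  have "\<exists>k. h = (deriv ^^ k) \<mu> \<Longrightarrow> smooth h" for h
  proof (coinduction arbitrary: h rule: smooth.coinduct)
    case smooth
    then obtain k where "h = (deriv ^^ k) \<mu>" by blast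
    moreover have "((deriv ^^ k) \<mu>) differentiable (at x)" for x
      using assms unfolding smooth_compact_01_def by blast
    ultimately have "(h has_real_derivative (deriv ^^ Suc k) \<mu> x) (at x)" for x
      by (simp add: DERIV_deriv_iff_real_differentiable)
    then show ?case by blast
  qed
  then show ?thesis by (metis funpow_0)
qed

lemma smooth_sinusoid: "smooth (\<lambda>x. c * sin (b * x + a))"
proof -
  have "\<exists>c b a. h = (\<lambda>x. c * sin (b * x + a)) \<Longrightarrow> smooth h" for h
  proof (coinduction arbitrary: h rule: smooth.coinduct)
    case smooth
    then obtain c b a where h: "h = (\<lambda>x. c * sin (b * x + a))" by blast
    have "(h has_real_derivative (c * b) * sin (b * x + (a + pi / 2))) (at x)" for x
      unfolding h by (auto intro!: derivative_eq_intros simp: sin_add cos_add algebra_simps)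
    then show ?case
      by (intro exI[of _ h] exI[of _ "\<lambda>x. (c * b) * sin (b * x + (a + pi / 2))"]) blast
  qed
  then show ?thesis by blast
qed

lemma smooth_phi: "smooth (phi j)"
  using smooth_sinusoid[of "sqrt 2" "real j * pi" 0] unfolding phi_def by (simp add: mult.assoc)

lemma deriv_eq_0_outside:
  fixes f :: "real \<Rightarrow> real"
  assumes "\<And>y. y \<notin> {a..b} \<Longrightarrow> f y = 0" and "x \<notin> {a..b}"
  shows "deriv f x = 0"
proof (rule DERIV_imp_deriv)
  have "((\<lambda>_. 0) has_real_derivative 0) (at x)" by simp
  then show "(f has_real_derivative 0) (at x)"
    by (rule has_field_derivative_transform_within_open[where S = "- {a..b}"]) (use assms in auto)
qed

lemma
  assumes "smooth \<mu>" and "\<And>x. x \<notin> {a..b} \<Longrightarrow> \<mu> x = 0" and "smooth f"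
  shows smooth_adA: "smooth (adA k \<mu> f)"
    and adA_eq_0_outside: "x \<notin> {a..b} \<Longrightarrow> adA k \<mu> f x = 0"
proof -
  have "smooth (adA k \<mu> f) \<and> (\<forall>x. x \<notin> {a..b} \<longrightarrow> adA k \<mu> f x = 0)"
    using \<open>smooth f\<close>
  proof (induction k arbitrary: f)
    case 0
    then show ?case using assms by (auto simp: mult_op_def intro!: smooth_mult)
  next
    case (Suc k)
    have adA_Suc: "adA (Suc k) \<mu> f = (\<lambda>x. lapA (adA k \<mu> f) x - adA k \<mu> (lapA f) x)"
      by (simp add: comm_def)
    have "deriv (deriv (adA k \<mu> f)) x = 0" if "x \<notin> {a..b}" for x
      using Suc.IH[OF Suc.prems] that
      by (intro deriv_eq_0_outside[of a b]) (auto intro: deriv_eq_0_outside)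
    moreover have "smooth (adA (Suc k) \<mu> f)"
      using Suc.IH[OF Suc.prems] Suc.IH[OF smooth_lapA[OF Suc.prems]] unfolding adA_Suc
      by (intro smooth_diff smooth_lapA) auto
    ultimately show ?case
      using Suc.IH[OF smooth_lapA[OF Suc.prems]] unfolding adA_Suc by (auto simp: lapA_def)
  qed
  then show "smooth (adA k \<mu> f)" "x \<notin> {a..b} \<Longrightarrow> adA k \<mu> f x = 0" by auto
qed

section \<open>Green's formula and the sine basis\<close>

lemma inner01_commute: "inner01 f g = inner01 g f"
  unfolding inner01_def by (simp add: mult.commute)

lemma inner01_cmult_left: "inner01 (\<lambda>x. c * f x) g = c * inner01 f g"
  unfolding inner01_def by (simp add: mult.assoc)

lemma inner01_cmult_right: "inner01 f (\<lambda>x. c * g x) = c * inner01 f g"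
  unfolding inner01_def by (simp add: mult.left_commute)

lemma inner01_diff_left:
  assumes "continuous_on {0..1} f" "continuous_on {0..1} g" "continuous_on {0..1} h"
  shows "inner01 (\<lambda>x. f x - g x) h = inner01 f h - inner01 g h"
  unfolding inner01_def left_diff_distrib
  by (intro integral_diff integrable_continuous_interval continuous_intros assms)

lemma inner01_lapA_symmetric:
  assumes u: "smooth u" and h: "smooth h" and u_outside: "\<And>x. x \<notin> {a..b} \<Longrightarrow> u x = 0"
    and "0 < a" "b < 1"
  shows "inner01 (lapA u) h = inner01 u (lapA h)"
proof -
  define F where "F x = deriv u x * h x - u x * deriv h x" for x
  have "(F has_real_derivative deriv (deriv u) x * h x - u x * deriv (deriv h) x) (at x)" for x
  proof -
    have "(F has_real_derivative (deriv (deriv u) x * h x + deriv h x * deriv u x)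
        - (deriv u x * deriv h x + deriv (deriv h) x * u x)) (at x)"
      unfolding F_def[abs_def]
      by (intro DERIV_diff DERIV_mult smooth_DERIV u h smooth_deriv)
    then show ?thesis by (simp add: algebra_simps)
  qed
  then have "((\<lambda>x. deriv (deriv u) x * h x - u x * deriv (deriv h) x) has_integral F 1 - F 0) {0..1}"
    by (intro fundamental_theorem_of_calculus)
       (auto simp: has_real_derivative_iff_has_vector_derivative has_vector_derivative_at_within)
  moreover have "F 1 = 0" "F 0 = 0"
    using assms deriv_eq_0_outside[of a b u] by (auto simp: F_def)
  ultimately have "integral {0..1} (\<lambda>x. deriv (deriv u) x * h x - u x * deriv (deriv h) x) = 0"
    by (simp add: integral_unique)
  then have "inner01 (deriv (deriv u)) h = inner01 u (deriv (deriv h))"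
    unfolding inner01_def
    by (subst (asm) integral_diff)
       (auto intro!: integrable_continuous_interval smooth_continuous_on smooth_mult
         smooth_deriv u h)
  then show ?thesis
    using inner01_cmult_left[of "-1" "deriv (deriv u)" h]
      inner01_cmult_right[of u "-1" "deriv (deriv h)"]
    by (simp add: lapA_def)
qed

lemma lapA_phi: "lapA (phi j) = (\<lambda>x. lam j * phi j x)"
proof
  fix x
  have "((\<lambda>x. sqrt 2 * (real j * pi) * cos (real j * pi * x)) has_real_derivative
      - sqrt 2 * (real j * pi) * (real j * pi) * sin (real j * pi * x)) (at x)"
    by (auto intro!: derivative_eq_intros)
  moreover have "deriv (phi j) = (\<lambda>x. sqrt 2 * (real j * pi) * cos (real j * pi * x))"
    unfolding phi_def by (intro ext DERIV_imp_deriv) (auto intro!: derivative_eq_intros)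
  ultimately show "lapA (phi j) x = lam j * phi j x"
    unfolding lapA_def by (simp add: DERIV_imp_deriv lam_def phi_def power2_eq_square)
qed

lemma abs_phi_le: "\<bar>phi j x\<bar> \<le> sqrt 2"
  unfolding phi_def by (simp add: abs_mult)

lemma cos_has_integral_01:
  fixes c :: real
  assumes "c \<noteq> 0"
  shows "((\<lambda>x. cos (c * x)) has_integral sin c / c) {0..1}"
proof -
  have "((\<lambda>x. sin (c * x) / c) has_real_derivative cos (c * x)) (at x)" for x
    using assms by (auto intro!: derivative_eq_intros)
  then have "((\<lambda>x. cos (c * x)) has_integral (sin (c * 1) / c - sin (c * 0) / c)) {0..1}"
    by (intro fundamental_theorem_of_calculus)
       (auto simp: has_real_derivative_iff_has_vector_derivative has_vector_derivative_at_within)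
  then show ?thesis by simp
qed

lemma inner01_phi_phi:
  assumes "j \<ge> 1" "k \<ge> 1"
  shows "inner01 (phi j) (phi k) = (if j = k then 1 else 0)"
proof -
  have prod: "phi j x * phi k x = cos ((real j - real k) * pi * x) - cos (real (j + k) * pi * x)"
    for x
    unfolding phi_def by (simp add: cos_diff cos_add algebra_simps)
  have "((\<lambda>x. cos ((real j - real k) * pi * x)) has_integral (if j = k then 1 else 0)) {0..1}"
  proof (cases "j = k")
    case False
    then show ?thesis
      using cos_has_integral_01[of "(real j - real k) * pi"]
      by (simp add: left_diff_distrib sin_diff)
  qed (use has_integral_const_real[of 1 0 1] in simp)
  moreover have "((\<lambda>x. cos (real (j + k) * pi * x)) has_integral 0) {0..1}"
    using cos_has_integral_01[of "real (j + k) * pi"] sin_npi[of "j + k"] assms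
    by (simp del: of_nat_add)
  ultimately have "((\<lambda>x. phi j x * phi k x) has_integral (if j = k then 1 else 0) - 0) {0..1}"
    unfolding prod by (rule has_integral_diff)
  then show ?thesis unfolding inner01_def by (simp add: integral_unique)
qed

section \<open>Completeness of the sine system and Parseval's identity\<close>

lemma orthogonal_sin_cos_power:
  assumes w: "continuous_on {0..1} w" and orth: "\<And>k. k \<ge> 1 \<Longrightarrow> inner01 w (phi k) = 0"
  shows "((\<lambda>x. w x * sin (real j * pi * x) * cos (pi * x) ^ n) has_integral 0) {0..1}"
proof (induction n arbitrary: j)
  case 0
  show ?case
  proof (cases "j = 0")
    case False
    have "((\<lambda>x. w x * phi j x) has_integral inner01 w (phi j)) {0..1}"
      unfolding inner01_def
      by (intro integrable_integral integrable_continuous_interval continuous_intros w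
          smooth_continuous_on smooth_phi)
    then have "((\<lambda>x. w x * phi j x) has_integral 0) {0..1}"
      using orth[of j] False by simp
    from has_integral_cmul[OF this, of "1 / sqrt 2"] show ?thesis by (simp add: phi_def)
  qed simp
next
  case (Suc n)
  show ?case
  proof (cases "j = 0")
    case False
    \<comment> \<open>2 sin(j t) cos t = sin((j + 1) t) + sin((j - 1) t)\<close>
    have split: "(\<lambda>x. w x * sin (real j * pi * x) * cos (pi * x) ^ Suc n)
      = (\<lambda>x. (1/2) * (w x * sin (real (Suc j) * pi * x) * cos (pi * x) ^ n
               + w x * sin (real (j - 1) * pi * x) * cos (pi * x) ^ n))"
      using False by (intro ext) (simp add: sin_add sin_diff algebra_simps)
    show ?thesis
      unfolding split
      using has_integral_mult_right[OF has_integral_add[OF Suc.IH[of "Suc j"] Suc.IH[of "j - 1"]],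
          of "1/2"]
      by (simp only: add_0 mult_zero_right)
  qed simp
qed

lemma cos_polynomial_approximation:
  fixes g :: "real \<Rightarrow> real"
  assumes g: "continuous_on {0..1} g" and "e > 0"
  obtains c N where "\<And>x. x \<in> {0..1} \<Longrightarrow> \<bar>g x - (\<Sum>i\<le>N. c i * cos (pi * x) ^ i)\<bar> < e"
proof -
  define G where "G t = g (arccos t / pi)" for t
  have "continuous_on {-1..1} (\<lambda>t. arccos t / pi)"
    by (intro continuous_intros continuous_on_arccos') auto
  moreover have "(\<lambda>t. arccos t / pi) ` {-1..1} \<subseteq> {0..1}"
    using arccos_bounded by (auto simp: field_simps)
  ultimately have "continuous_on {-1..1} G"
    unfolding G_def by (rule continuous_on_compose2[OF g])
  then obtain q where "real_polynomial_function q" and q: "\<And>t. t \<in> {-1..1} \<Longrightarrow> \<bar>G t - q t\<bar> < e"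
    using Stone_Weierstrass_real_polynomial_function[OF compact_Icc _ \<open>e > 0\<close>] by blast
  moreover obtain c N where "q = (\<lambda>t. \<Sum>i\<le>N. c i * t ^ i)"
    using \<open>real_polynomial_function q\<close> real_polynomial_function_iff_sum by blast
  moreover have "G (cos (pi * x)) = g x" if "x \<in> {0..1}" for x
    using that by (simp add: G_def arccos_cos)
  ultimately show ?thesis
    by (intro that[of c N]) (metis atLeastAtMost_iff cos_ge_minus_one cos_le_one)
qed

lemma eq_0_if_orthogonal_to_approximants:
  fixes g :: "real \<Rightarrow> real"
  assumes "a < b" and g: "continuous_on {a..b} g"
    and approx: "\<And>e. e > 0 \<Longrightarrow> \<exists>h. continuous_on {a..b} h \<and> (\<forall>x\<in>{a..b}. \<bar>g x - h x\<bar> \<le> e)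
      \<and> integral {a..b} (\<lambda>x. g x * h x) = 0"
    and "x \<in> {a..b}"
  shows "g x = 0"
proof -
  define I where "I = integral {a..b} (\<lambda>x. g x * g x)"
  define A where "A = integral {a..b} (\<lambda>x. \<bar>g x\<bar>)"
  have "A \<ge> 0"
    unfolding A_def by (intro integral_nonneg integrable_continuous_interval continuous_intros g) auto
  have I_le: "I \<le> e * A" if "e > 0" for e
  proof -
    obtain h where h: "continuous_on {a..b} h" and gh: "\<forall>x\<in>{a..b}. \<bar>g x - h x\<bar> \<le> e"
      and orth: "integral {a..b} (\<lambda>x. g x * h x) = 0"
      using approx[OF \<open>e > 0\<close>] by blast
    have "I = integral {a..b} (\<lambda>x. g x * (g x - h x))"
      unfolding I_def right_diff_distrib
      by (subst integral_diff) (auto intro!: integrable_continuous_interval continuous_intros g h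
          simp: orth)
    also have "\<dots> \<le> integral {a..b} (\<lambda>x. \<bar>g x\<bar> * e)"
    proof (intro integral_le integrable_continuous_interval continuous_intros g h)
      fix x
      assume "x \<in> {a..b}"
      have "g x * (g x - h x) \<le> \<bar>g x\<bar> * \<bar>g x - h x\<bar>" by (metis abs_ge_self abs_mult)
      also have "\<dots> \<le> \<bar>g x\<bar> * e" using gh \<open>x \<in> {a..b}\<close> by (intro mult_left_mono) auto
      finally show "g x * (g x - h x) \<le> \<bar>g x\<bar> * e" .
    qed
    also have "\<dots> = e * A" unfolding A_def by (simp add: mult.commute)
    finally show ?thesis .
  qed
  have "I \<le> 0"
  proof (rule field_le_epsilon)
    fix e :: real
    assume "e > 0"
    then have "I \<le> (e / (A + 1)) * A" using I_le[of "e / (A + 1)"] \<open>A \<ge> 0\<close> by simp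
    also have "\<dots> \<le> e" using \<open>A \<ge> 0\<close> \<open>e > 0\<close> by (simp add: field_simps)
    finally show "I \<le> 0 + e" by simp
  qed
  moreover have "I \<ge> 0"
    unfolding I_def by (intro integral_nonneg integrable_continuous_interval continuous_intros g) auto
  ultimately have "integral {a..b} (\<lambda>x. g x * g x) = 0" unfolding I_def by simp
  moreover have "continuous_on {a..b} (\<lambda>x. g x * g x)" by (intro continuous_intros g)
  ultimately have "\<forall>x\<in>{a..b}. g x * g x = 0"
    using integral_eq_0_iff[of a b "\<lambda>x. g x * g x"] \<open>a < b\<close> by simp
  with \<open>x \<in> {a..b}\<close> show ?thesis by simp
qed

lemma sine_system_complete:
  assumes w: "continuous_on {0..1} w" and orth: "\<And>k. k \<ge> 1 \<Longrightarrow> inner01 w (phi k) = 0"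
    and x: "x \<in> {0<..<1}"
  shows "w x = 0"
proof -
  define g where "g x = w x * sin (pi * x)" for x
  have g: "continuous_on {0..1} g" unfolding g_def by (intro continuous_intros w)
  have "\<exists>h. continuous_on {0..1} h \<and> (\<forall>x\<in>{0..1}. \<bar>g x - h x\<bar> \<le> e)
      \<and> integral {0..1} (\<lambda>x. g x * h x) = 0" if "e > 0" for e
  proof -
    obtain c N where approx: "\<And>x. x \<in> {0..1} \<Longrightarrow> \<bar>g x - (\<Sum>i\<le>N. c i * cos (pi * x) ^ i)\<bar> < e"
      using cos_polynomial_approximation[OF g \<open>e > 0\<close>] by blast
    have "((\<lambda>x. w x * sin (pi * x) * cos (pi * x) ^ i) has_integral 0) {0..1}" for i
      using orthogonal_sin_cos_power[OF w orth, of 1] by simp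
    then have "((\<lambda>x. \<Sum>i\<le>N. c i * (w x * sin (pi * x) * cos (pi * x) ^ i))
        has_integral (\<Sum>i\<le>N. c i * 0)) {0..1}"
      by (intro has_integral_sum has_integral_mult_right) auto
    then have "integral {0..1} (\<lambda>x. g x * (\<Sum>i\<le>N. c i * cos (pi * x) ^ i)) = 0"
      by (simp add: g_def sum_distrib_left algebra_simps integral_unique)
    moreover have "continuous_on {0..1} (\<lambda>x. \<Sum>i\<le>N. c i * cos (pi * x) ^ i)"
      by (intro continuous_intros)
    ultimately show ?thesis using approx less_imp_le by blast
  qed
  then have "g x = 0" using x by (intro eq_0_if_orthogonal_to_approximants[OF _ g]) auto
  moreover have "sin (pi * x) > 0" using x by (intro sin_gt_zero) auto
  ultimately show ?thesis by (simp add: g_def)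
qed

lemma uniform_limit_sine_series:
  fixes \<alpha> M :: "nat \<Rightarrow> real" and g :: "real \<Rightarrow> real"
  assumes \<alpha>: "\<And>i. \<bar>\<alpha> i\<bar> \<le> M i" and M: "summable M" and g: "\<And>x. x \<in> {0..1} \<Longrightarrow> \<bar>g x\<bar> \<le> B"
  shows "uniform_limit {0..1} (\<lambda>n x. \<Sum>i<n. \<alpha> i * phi (Suc i) x * g x)
    (\<lambda>x. (\<Sum>i. \<alpha> i * phi (Suc i) x) * g x) sequentially"
proof -
  have term_le: "\<bar>\<alpha> i * phi (Suc i) x\<bar> \<le> M i * sqrt 2" for i x
    unfolding abs_mult using \<alpha>[of i] by (intro mult_mono \<alpha> abs_phi_le) auto
  then have "summable (\<lambda>i. \<alpha> i * phi (Suc i) x)" for x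
    by (intro summable_comparison_test'[OF summable_mult2[OF M, of "sqrt 2"]]) auto
  then have "(\<lambda>x. \<Sum>i. \<alpha> i * phi (Suc i) x * g x) = (\<lambda>x. (\<Sum>i. \<alpha> i * phi (Suc i) x) * g x)"
    by (intro ext suminf_mult2[symmetric])
  moreover have "uniform_limit {0..1} (\<lambda>n x. \<Sum>i<n. \<alpha> i * phi (Suc i) x * g x)
      (\<lambda>x. \<Sum>i. \<alpha> i * phi (Suc i) x * g x) sequentially"
  proof (rule Weierstrass_m_test[where M = "\<lambda>i. M i * sqrt 2 * B"])
    fix i and x :: real
    assume "x \<in> {0..1}"
    then show "norm (\<alpha> i * phi (Suc i) x * g x) \<le> M i * sqrt 2 * B"
      unfolding real_norm_def abs_mult[of _ "g x"] using term_le[of i x]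
      by (intro mult_mono g) auto
  qed (intro summable_mult2 M)
  ultimately show ?thesis by simp
qed

lemma sine_series_continuous:
  fixes \<alpha> M :: "nat \<Rightarrow> real"
  assumes "\<And>i. \<bar>\<alpha> i\<bar> \<le> M i" and "summable M"
  shows "continuous_on {0..1} (\<lambda>x. \<Sum>i. \<alpha> i * phi (Suc i) x)"
  using uniform_limit_theorem[OF _ uniform_limit_sine_series[OF assms, of "\<lambda>x. 1" 1]]
  by (simp add: continuous_intros smooth_continuous_on smooth_phi)

lemma sine_series_inner01:
  fixes \<alpha> M :: "nat \<Rightarrow> real" and h :: "real \<Rightarrow> real"
  assumes \<alpha>: "\<And>i. \<bar>\<alpha> i\<bar> \<le> M i" and M: "summable M" and h: "continuous_on {0..1} h"
  shows "(\<lambda>i. \<alpha> i * inner01 (phi (Suc i)) h) sums inner01 (\<lambda>x. \<Sum>i. \<alpha> i * phi (Suc i) x) h"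
proof -
  obtain B where B: "\<And>x. x \<in> {0..1} \<Longrightarrow> \<bar>h x\<bar> \<le> B"
    using compact_imp_bounded[OF compact_continuous_image[OF h compact_Icc]]
    unfolding bounded_iff by force
  have "continuous_on {0..1} (\<lambda>x. \<Sum>i<n. \<alpha> i * phi (Suc i) x * h x)" for n
    by (intro continuous_intros smooth_continuous_on smooth_phi h)
  then obtain I J
    where I: "\<And>n. ((\<lambda>x. \<Sum>i<n. \<alpha> i * phi (Suc i) x * h x) has_integral I n) {0..1}"
      and J: "((\<lambda>x. (\<Sum>i. \<alpha> i * phi (Suc i) x) * h x) has_integral J) {0..1}"
      and "I \<longlonglongrightarrow> J"
    using uniform_limit_integral[OF uniform_limit_sine_series[OF \<alpha> M, of h B, OF B]] by auto
  moreover have "I = (\<lambda>n. \<Sum>i<n. \<alpha> i * inner01 (phi (Suc i)) h)"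
  proof
    fix n
    have "((\<lambda>x. phi (Suc i) x * h x) has_integral inner01 (phi (Suc i)) h) {0..1}" for i
      unfolding inner01_def
      by (intro integrable_integral integrable_continuous_interval continuous_intros
          smooth_continuous_on smooth_phi h)
    from has_integral_mult_right[OF this] have
      "((\<lambda>x. \<Sum>i<n. \<alpha> i * phi (Suc i) x * h x)
        has_integral (\<Sum>i<n. \<alpha> i * inner01 (phi (Suc i)) h)) {0..1}"
      by (intro has_integral_sum) (auto simp: mult.assoc)
    with I show "I n = (\<Sum>i<n. \<alpha> i * inner01 (phi (Suc i)) h)" by (rule has_integral_unique)
  qed
  moreover have "J = inner01 (\<lambda>x. \<Sum>i. \<alpha> i * phi (Suc i) x) h"
    using J unfolding inner01_def by (simp add: integral_unique)
  ultimately show ?thesis unfolding sums_def by simp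
qed

text \<open>Green's formula moves the Laplacian onto the eigenfunction, so the j-th coefficient
  decays like 1 / lam j.\<close>

lemma sine_coefficients_summable_bound:
  assumes u: "smooth u" and u_outside: "\<And>x. x \<notin> {a..b} \<Longrightarrow> u x = 0" and ab: "0 < a" "b < 1"
  obtains M where "summable M" and "\<And>i. \<bar>inner01 u (phi (Suc i))\<bar> \<le> M i"
proof
  define C where "C = sqrt 2 * integral {0..1} (\<lambda>x. \<bar>lapA u x\<bar>)"
  have lapA_u: "continuous_on {0..1} (lapA u)" by (intro smooth_continuous_on smooth_lapA u)
  show "summable (\<lambda>i. C * inverse (real (Suc i) ^ 2))"
  proof (rule summable_mult)
    have "summable (\<lambda>n. inverse (real n ^ 2))" by (rule inverse_power_summable) simp
    then show "summable (\<lambda>n. inverse (real (Suc n) ^ 2))" by (subst summable_Suc_iff)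
  qed
  fix i
  have "lam (Suc i) * inner01 u (phi (Suc i)) = inner01 (lapA u) (phi (Suc i))"
    using inner01_lapA_symmetric[OF u smooth_phi u_outside ab]
    by (simp add: lapA_phi inner01_cmult_right)
  also have "\<bar>\<dots>\<bar> \<le> integral {0..1} (\<lambda>x. \<bar>lapA u x\<bar> * sqrt 2)"
    unfolding inner01_def
    using integral_norm_bound_integral[of "\<lambda>x. lapA u x * phi (Suc i) x" "{0..1}"
        "\<lambda>x. \<bar>lapA u x\<bar> * sqrt 2"]
    by (simp add: abs_mult mult_left_mono abs_phi_le integrable_continuous_interval continuous_intros
        lapA_u smooth_continuous_on smooth_phi)
  also have "\<dots> = C" unfolding C_def by (simp add: mult.commute)
  finally have le_C: "lam (Suc i) * \<bar>inner01 u (phi (Suc i))\<bar> \<le> C"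
    by (simp add: abs_mult lam_def)
  have "1 \<le> pi ^ 2" using pi_gt3 by (intro one_le_power) simp
  then have "real (Suc i) ^ 2 \<le> lam (Suc i)"
    unfolding lam_def power_mult_distrib using mult_left_mono[of 1 "pi ^ 2" "real (Suc i) ^ 2"] by simp
  then have "real (Suc i) ^ 2 * \<bar>inner01 u (phi (Suc i))\<bar> \<le> C"
    by (meson abs_ge_zero le_C mult_right_mono order_trans)
  then show "\<bar>inner01 u (phi (Suc i))\<bar> \<le> C * inverse (real (Suc i) ^ 2)"
    by (simp add: field_simps)
qed

lemma sine_parseval:
  assumes u: "smooth u" and u_outside: "\<And>x. x \<notin> {a..b} \<Longrightarrow> u x = 0" and ab: "0 < a" "b < 1"
    and v: "continuous_on {0..1} v"
  shows "(\<lambda>i. inner01 u (phi (Suc i)) * inner01 v (phi (Suc i))) sums inner01 u v"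
proof -
  define \<alpha> where "\<alpha> i = inner01 u (phi (Suc i))" for i
  define S where "S x = (\<Sum>i. \<alpha> i * phi (Suc i) x)" for x
  obtain M where M: "summable M" and \<alpha>: "\<And>i. \<bar>\<alpha> i\<bar> \<le> M i"
    using sine_coefficients_summable_bound[OF u u_outside ab] unfolding \<alpha>_def by blast
  have S: "continuous_on {0..1} S"
    unfolding S_def using sine_series_continuous[OF \<alpha> M] .
  have u_cont: "continuous_on {0..1} u" by (rule smooth_continuous_on[OF u])
  have "inner01 S (phi k) = inner01 u (phi k)" if "k \<ge> 1" for k
  proof -
    have "(\<lambda>i. \<alpha> i * inner01 (phi (Suc i)) (phi k)) = (\<lambda>i. if i = k - 1 then \<alpha> i else 0)"
      using that by (intro ext) (auto simp: inner01_phi_phi)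
    then have "(\<lambda>i. \<alpha> i * inner01 (phi (Suc i)) (phi k)) sums \<alpha> (k - 1)"
      using sums_single[of "k - 1" \<alpha>] by simp
    moreover have "(\<lambda>i. \<alpha> i * inner01 (phi (Suc i)) (phi k)) sums inner01 S (phi k)"
      unfolding S_def by (rule sine_series_inner01[OF \<alpha> M smooth_continuous_on[OF smooth_phi]])
    ultimately have "inner01 S (phi k) = \<alpha> (k - 1)" by (metis sums_unique2)
    with that show ?thesis by (simp add: \<alpha>_def)
  qed
  then have orth: "inner01 (\<lambda>x. u x - S x) (phi k) = 0" if "k \<ge> 1" for k
    using that by (simp add: inner01_diff_left u_cont S smooth_continuous_on smooth_phi)
  have "continuous_on {0..1} (\<lambda>x. u x - S x)" by (intro continuous_intros u_cont S)
  from sine_system_complete[OF this orth] have interior: "u x = S x" if "x \<in> {0<..<1}" for x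
    using that by simp
  have "phi j 0 = 0" "phi j 1 = 0" for j by (simp_all add: phi_def)
  then have "u x = S x" if "x \<in> {0..1}" for x
    using that interior[of x] u_outside[of x] ab by (cases "x \<in> {0<..<1}") (auto simp: S_def)
  then have "inner01 u v = inner01 S v"
    unfolding inner01_def by (intro integral_cong) simp
  with sine_series_inner01[OF \<alpha> M v] show ?thesis
    unfolding S_def \<alpha>_def by (simp add: inner01_commute[of v])
qed

section \<open>Iterated commutators with a compactly supported multiplier\<close>

lemma midpoint_weight_split:
  fixes L l l' :: real
  shows "(L - (l + l') / 2) * (l' - L) ^ q * (L - l) ^ q
    = (-1) ^ q * (((L - l) ^ Suc q * (L - l') ^ q + (L - l) ^ q * (L - l') ^ Suc q) / 2)"
proof -
  have "(l' - L) ^ q = (-1) ^ q * (L - l') ^ q" by (metis minus_diff_eq power_minus)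
  then show ?thesis by (simp add: field_simps)
qed

lemma neg_one_power_square: "(-1 :: real) ^ q * (-1) ^ q = 1"
  by (simp add: power_add[symmetric])

locale smooth_bump =
  fixes \<mu> :: "real \<Rightarrow> real" and a b :: real
  assumes smooth: "smooth \<mu>" and outside: "\<And>x. x \<notin> {a..b} \<Longrightarrow> \<mu> x = 0"
    and inside_01: "0 < a" "b < 1"
begin

lemma smooth_adA_mu: "smooth f \<Longrightarrow> smooth (adA k \<mu> f)"
  by (rule smooth_adA[OF smooth]) (auto intro: outside)

lemma adA_mu_eq_0_outside: "smooth f \<Longrightarrow> x \<notin> {a..b} \<Longrightarrow> adA k \<mu> f x = 0"
  by (rule adA_eq_0_outside[OF smooth]) (auto intro: outside)

lemma inner01_lapA_adA_symmetric:
  "smooth f \<Longrightarrow> smooth g \<Longrightarrow> inner01 (lapA (adA k \<mu> f)) g = inner01 (adA k \<mu> f) (lapA g)"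
  by (intro inner01_lapA_symmetric[OF smooth_adA_mu _ adA_mu_eq_0_outside inside_01])

lemma inner01_adA_diff:
  assumes "smooth f" "smooth g"
  shows "inner01 (adA (Suc k) \<mu> f) g
    = inner01 (lapA (adA k \<mu> f)) g - inner01 (adA k \<mu> (lapA f)) g"
  unfolding adA.simps comm_def
  using assms by (intro inner01_diff_left smooth_continuous_on smooth_lapA smooth_adA_mu)

lemma inner01_adA_adjoint:
  "smooth f \<Longrightarrow> smooth g \<Longrightarrow> inner01 (adA k \<mu> f) g = (-1) ^ k * inner01 f (adA k \<mu> g)"
proof (induction k arbitrary: f g)
  case 0
  then show ?case by (simp add: inner01_def mult_op_def mult.assoc mult.left_commute)
next
  case (Suc k)
  note f = \<open>smooth f\<close> and g = \<open>smooth g\<close>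
  have "inner01 (adA (Suc k) \<mu> f) g
      = inner01 (lapA (adA k \<mu> f)) g - inner01 (adA k \<mu> (lapA f)) g"
    by (rule inner01_adA_diff[OF f g])
  also have "\<dots> = (-1) ^ k * inner01 f (adA k \<mu> (lapA g))
      - (-1) ^ k * inner01 f (lapA (adA k \<mu> g))"
    using inner01_lapA_adA_symmetric[OF f g] inner01_lapA_adA_symmetric[OF g f]
      Suc.IH[OF f smooth_lapA[OF g]] Suc.IH[OF smooth_lapA[OF f] g]
    by (simp add: inner01_commute)
  also have "\<dots> = (-1) ^ Suc k * (inner01 f (lapA (adA k \<mu> g)) - inner01 f (adA k \<mu> (lapA g)))"
    by (simp add: algebra_simps)
  also have "\<dots> = (-1) ^ Suc k * inner01 f (adA (Suc k) \<mu> g)"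
    using inner01_adA_diff[OF g f] by (simp add: inner01_commute del: adA.simps)
  finally show ?case .
qed

lemma inner01_adA_phi:
  "inner01 (adA k \<mu> (phi i)) (phi j) = (lam j - lam i) ^ k * inner01 (mult_op \<mu> (phi i)) (phi j)"
proof (induction k)
  case (Suc k)
  have "inner01 (lapA (adA k \<mu> (phi i))) (phi j) = lam j * inner01 (adA k \<mu> (phi i)) (phi j)"
    using inner01_lapA_adA_symmetric[OF smooth_phi smooth_phi]
    by (simp add: lapA_phi inner01_cmult_right)
  moreover have "inner01 (adA k \<mu> (lapA (phi i))) (phi j) = lam i * inner01 (adA k \<mu> (phi i)) (phi j)"
    using inner01_adA_adjoint[OF smooth_cmult[OF smooth_phi] smooth_phi, of k "lam i" i j]
      inner01_adA_adjoint[OF smooth_phi smooth_phi, of k i j]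
    by (simp add: lapA_phi inner01_cmult_left)
  ultimately show ?case
    using Suc.IH inner01_adA_diff[OF smooth_phi smooth_phi, of k i j]
    by (simp add: algebra_simps del: adA.simps)
qed simp

lemma inner01_adA_phi_adA_phi_sums:
  "(\<lambda>n. (lam (Suc n) - lam i) ^ k * inner01 (mult_op \<mu> (phi i)) (phi (Suc n))
      * ((lam (Suc n) - lam j) ^ l * inner01 (mult_op \<mu> (phi j)) (phi (Suc n))))
    sums inner01 (adA k \<mu> (phi i)) (adA l \<mu> (phi j))"
proof -
  have "(\<lambda>n. inner01 (adA k \<mu> (phi i)) (phi (Suc n)) * inner01 (adA l \<mu> (phi j)) (phi (Suc n)))
      sums inner01 (adA k \<mu> (phi i)) (adA l \<mu> (phi j))"
    by (intro sine_parseval[OF _ _ inside_01] smooth_adA_mu adA_mu_eq_0_outside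
        smooth_continuous_on smooth_phi)
  then show ?thesis by (simp add: inner01_adA_phi)
qed

lemma inner01_comm_adA_phi:
  "inner01 (comm (adA q \<mu>) (adA (Suc q) \<mu>) (phi i)) (phi j)
    = (-1) ^ q * (inner01 (adA (Suc q) \<mu> (phi i)) (adA q \<mu> (phi j))
        + inner01 (adA q \<mu> (phi i)) (adA (Suc q) \<mu> (phi j)))"
proof -
  have "inner01 (comm (adA q \<mu>) (adA (Suc q) \<mu>) (phi i)) (phi j)
      = inner01 (adA q \<mu> (adA (Suc q) \<mu> (phi i))) (phi j)
        - inner01 (adA (Suc q) \<mu> (adA q \<mu> (phi i))) (phi j)"
    unfolding comm_def
    by (intro inner01_diff_left smooth_continuous_on smooth_adA_mu smooth_phi)
  also have "\<dots> = (-1) ^ q * inner01 (adA (Suc q) \<mu> (phi i)) (adA q \<mu> (phi j))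
      - (-1) ^ Suc q * inner01 (adA q \<mu> (phi i)) (adA (Suc q) \<mu> (phi j))"
    by (simp only: inner01_adA_adjoint[OF smooth_adA_mu[OF smooth_phi] smooth_phi])
  finally show ?thesis by (simp add: algebra_simps)
qed

lemma AKp_Suc:
  "AKp K (Suc q) \<mu> = (inner01 (adA (Suc q) \<mu> (phi 1)) (adA q \<mu> (phi K))
    + inner01 (adA q \<mu> (phi 1)) (adA (Suc q) \<mu> (phi K))) / 2"
proof -
  define m where "m i n = inner01 (mult_op \<mu> (phi i)) (phi n)" for i n
  define w where "w r s n = (lam (Suc n) - lam 1) ^ r * m 1 (Suc n) * ((lam (Suc n) - lam K) ^ s * m K (Suc n))"
    for r s n
  define P1 where "P1 = inner01 (adA (Suc q) \<mu> (phi 1)) (adA q \<mu> (phi K))"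
  define P2 where "P2 = inner01 (adA q \<mu> (phi 1)) (adA (Suc q) \<mu> (phi K))"
  have series: "(\<lambda>n. (-1) ^ q * ((w (Suc q) q n + w q (Suc q) n) / 2)) sums ((-1) ^ q * ((P1 + P2) / 2))"
    unfolding w_def m_def P1_def P2_def
    by (intro sums_mult sums_divide sums_add inner01_adA_phi_adA_phi_sums)
  have summand: "(\<lambda>n. let j = Suc n in
        (lam j - (lam 1 + lam K) / 2) * (lam K - lam j) ^ q * (lam j - lam 1) ^ q * coefc \<mu> K j)
      = (\<lambda>n. (-1) ^ q * ((w (Suc q) q n + w q (Suc q) n) / 2))"
    unfolding Let_def midpoint_weight_split coefc_def m_def w_def by (intro ext) (simp add: algebra_simps)
  have "AKp K (Suc q) \<mu> = (-1) ^ q * ((-1) ^ q * ((P1 + P2) / 2))"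
    unfolding AKp_def diff_Suc_1 summand sums_unique[OF series, symmetric] ..
  then show ?thesis
    unfolding P1_def P2_def by (simp add: mult.assoc[symmetric] neg_one_power_square)
qed

end

theorem propositionA2:
  fixes K p :: nat and \<mu> :: "real \<Rightarrow> real"
  assumes "K \<ge> 1" and "p \<ge> 1" and "smooth_compact_01 \<mu>"
  shows "AKp K p \<mu> =
    (-1) ^ (p - 1) / 2 * inner01 (comm (adA (p - 1) \<mu>) (adA p \<mu>) (phi 1)) (phi K)"
proof -
  obtain a b where "0 < a" "b < 1" "\<And>x. x \<notin> {a..b} \<Longrightarrow> \<mu> x = 0"
    using assms(3) unfolding smooth_compact_01_def by blast
  then interpret smooth_bump \<mu> a b
    using smooth_compact_01_imp_smooth[OF assms(3)] by unfold_locales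
  obtain q where p: "p = Suc q" using assms(2) by (cases p) auto
  show ?thesis
    unfolding p diff_Suc_1 AKp_Suc inner01_comm_adA_phi
    by (simp add: mult.assoc[symmetric] neg_one_power_square)
qed

end
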